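(* Let $\mathcal{X}\subseteq\mathbb{R}^d$ be a nonempty closed convex bounded set, $R\ge\max_{x,y\in\mathcal{X}}\|x-y\|$, and let $F\colon\mathcal{X}\to\mathbb{R}^d$ be monotone. Let $x_0,x_1,\dots,x_T\in\mathcal{X}$ be the iterates of Algorithm AdaPEG (described in the context), $\bar x_T=\frac1T\sum_{t=1}^Tx_t$, and $\xi_t:=F(x_t)-\widehat{F(x_t)}$. Then \[T\cdot\mathrm{Err}(\bar x_T)\le\sup_{y\in\mathcal{X}}\left(\sum_{t=1}^T\langle\widehat{F(x_t)},x_t-y\rangle\right)+R\left\|\sum_{t=1}^T\xi_t\right\|+\sum_{t=1}^T\langle\xi_t,x_t-x_0\rangle.\]
   Context: $\|\cdot\|$ is the Euclidean norm. Monotone: $\langle F(x)-F(y),x-y\rangle\ge0$ for all $x,y\in\mathcal{X}$. $\widehat{F(x_t)}\in\mathbb{R}^d$ denotes the (stochastic) oracle answer returned when querying $F$ at $x_t$. $\mathrm{Err}(x)=\sup_{y\in\mathcal{X}}\langle F(y),x-y\rangle$. Algorithm AdaPEG: $x_0=z_0\in\mathcal{X}$, $\gamma_0\ge0$, $\eta>0$. For $t=1,\dots,T$: $x_t=\arg\min_{u\in\mathcal{X}}\{\langle\widehat{F(x_{t-1})},u\rangle+\tfrac12\gamma_{t-1}\|u-z_{t-1}\|^2\}$; $\gamma_t=\frac1\eta\sqrt{\eta^2\gamma_0^2+\sum_{s=1}^t\|\widehat{F(x_s)}-\widehat{F(x_{s-1})}\|^2}$; $z_t=\arg\min_{u\in\mathcal{X}}\{\langle\widehat{F(x_t)},u\rangle+\tfrac12\gamma_{t-1}\|u-z_{t-1}\|^2+\tfrac12(\gamma_t-\gamma_{t-1})\|u-x_t\|^2\}$.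 *)

theory Defs
  imports "HOL-Analysis.Analysis"
begin

definition monotone_op :: "'a::real_inner set \<Rightarrow> ('a \<Rightarrow> 'a) \<Rightarrow> bool" where
  "monotone_op X F \<longleftrightarrow> (\<forall>x\<in>X. \<forall>y\<in>X. inner (F x - F y) (x - y) \<ge> 0)"

definition Err :: "'a::real_inner set \<Rightarrow> ('a \<Rightarrow> 'a) \<Rightarrow> 'a \<Rightarrow> real" where
  "Err X F x = (SUP y\<in>X. inner (F y) (x - y))"

definition is_argmin_on :: "'a set \<Rightarrow> ('a \<Rightarrow> real) \<Rightarrow> 'a \<Rightarrow> bool" where
  "is_argmin_on X phi u \<longleftrightarrow> u \<in> X \<and> (\<forall>v\<in>X. phi u \<le> phi v)"

text \<open>The iterates x, z and step sizes gamma of AdaPEG up to horizon T,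
  with oracle answers Fh t returned when querying F at x t.\<close>
definition AdaPEG :: "'a::euclidean_space set \<Rightarrow> real \<Rightarrow> nat \<Rightarrow> (nat \<Rightarrow> 'a) \<Rightarrow>
    (nat \<Rightarrow> 'a) \<Rightarrow> (nat \<Rightarrow> 'a) \<Rightarrow> (nat \<Rightarrow> real) \<Rightarrow> bool" where
  "AdaPEG X eta T Fh x z gamma \<longleftrightarrow>
     x 0 \<in> X \<and> z 0 = x 0 \<and> gamma 0 \<ge> 0 \<and> eta > 0 \<and>
     (\<forall>t\<in>{1..T}.
        is_argmin_on X (\<lambda>u. inner (Fh (t-1)) u + 1/2 * gamma (t-1) * (norm (u - z (t-1)))\<^sup>2) (x t) \<and>
        gamma t = 1 / eta * sqrt (eta\<^sup>2 * (gamma 0)\<^sup>2 + (\<Sum>s=1..t. (norm (Fh s - Fh (s-1)))\<^sup>2)) \<and>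
        is_argmin_on X (\<lambda>u. inner (Fh t) u + 1/2 * gamma (t-1) * (norm (u - z (t-1)))\<^sup>2
                               + 1/2 * (gamma t - gamma (t-1)) * (norm (u - x t))\<^sup>2) (z t))"

end

theory Submission
  imports Defs
begin

text \<open>For y in X, monotonicity gives T <F y, avg - y> \<le> \<Sum>t <F (x t), x t - y>; writing
  F (x t) = Fh t + \<xi> t and x t - y = (x t - x 0) + (x 0 - y) splits the right-hand side into the
  oracle regret against y, the noise correlated with the iterates, and <\<Sum>t \<xi> t, x 0 - y>, which is
  at most R times the norm of the total noise since x 0 and y lie in X.\<close>

lemma AdaPEG_iterate_mem:
  assumes "AdaPEG X eta T Fh x z gamma" and "t \<le> T"
  shows "x t \<in> X"
  using assms unfolding AdaPEG_def is_argmin_on_def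
  by (cases "t = 0") auto

lemma Err_le:
  assumes "X \<noteq> {}" and "\<And>y. y \<in> X \<Longrightarrow> inner (F y) (x - y) \<le> b"
  shows "Err X F x \<le> b"
  unfolding Err_def using assms by (rule cSUP_least)

lemma bdd_above_const_minus_inner:
  fixes X :: "'a::real_inner set"
  assumes "bounded X"
  shows "bdd_above ((\<lambda>y. c - inner a y) ` X)"
proof -
  have "bounded ((\<lambda>y. c - inner a y) ` X)"
  proof (rule bounded_minus_comp)
    show "bounded ((\<lambda>y. c) ` X)"
      by (rule bounded_subset[of "{c}"]) auto
    show "bounded ((\<lambda>y. inner a y) ` X)"
      using assms bounded_linear_inner_right by (rule bounded_linear_image)
  qed
  then show ?thesis
    by (rule bounded_imp_bdd_above)
qed

lemma sum_gap_le_sum_monotone_gap: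
  fixes F :: "'a::real_inner \<Rightarrow> 'a"
  assumes "monotone_op X F" and "\<And>i. i \<in> I \<Longrightarrow> x i \<in> X" and "y \<in> X"
  shows "(\<Sum>i\<in>I. inner (F y) (x i - y)) \<le> (\<Sum>i\<in>I. inner (F (x i)) (x i - y))"
proof (rule sum_mono)
  fix i assume "i \<in> I"
  then have "inner (F (x i) - F y) (x i - y) \<ge> 0"
    using assms unfolding monotone_op_def by blast
  then show "inner (F y) (x i - y) \<le> inner (F (x i)) (x i - y)"
    by (simp add: inner_diff_left)
qed

lemma sum_inner_noise_split:
  fixes G Gh x :: "'i \<Rightarrow> 'a::real_inner"
  shows "(\<Sum>i\<in>I. inner (G i) (x i - y))
    = (\<Sum>i\<in>I. inner (Gh i) (x i - y)) + (\<Sum>i\<in>I. inner (G i - Gh i) (x i - anchor))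
      + inner (\<Sum>i\<in>I. G i - Gh i) (anchor - y)"
  by (simp add: inner_sum_left inner_diff_left inner_diff_right sum_subtractf
      sum.distrib[symmetric] algebra_simps)

lemma inner_le_diameter:
  assumes "norm (u - v) \<le> R"
  shows "inner a (u - v) \<le> R * norm a"
proof -
  have "inner a (u - v) \<le> norm a * norm (u - v)"
    by (rule norm_cauchy_schwarz)
  also have "\<dots> \<le> norm a * R"
    using assms by (simp add: mult_left_mono)
  finally show ?thesis
    by (simp add: mult.commute)
qed

lemma card_times_Err_average_le:
  fixes X :: "'a::real_inner set" and F :: "'a \<Rightarrow> 'a" and Fh x :: "'i \<Rightarrow> 'a"
  assumes "X \<noteq> {}" and "bounded X" and "\<forall>u\<in>X. \<forall>v\<in>X. norm (u - v) \<le> R"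
    and "monotone_op X F"
    and "finite I" and "I \<noteq> {}" and "\<And>i. i \<in> I \<Longrightarrow> x i \<in> X" and "anchor \<in> X"
  shows "real (card I) * Err X F ((1 / real (card I)) *\<^sub>R (\<Sum>i\<in>I. x i))
    \<le> (SUP y\<in>X. (\<Sum>i\<in>I. inner (Fh i) (x i - y)))
       + R * norm (\<Sum>i\<in>I. F (x i) - Fh i)
       + (\<Sum>i\<in>I. inner (F (x i) - Fh i) (x i - anchor))"
    (is "?n * Err X F ?avg \<le> ?regret + ?total_noise + ?correlated_noise")
proof -
  have n_pos: "?n > 0"
    using assms(5,6) by (simp add: card_gt_0_iff)
  have "?n * inner (F y) (?avg - y) \<le> ?regret + ?total_noise + ?correlated_noise"
    if "y \<in> X" for y
  proof -
    have "?n * inner (F y) (?avg - y) = (\<Sum>i\<in>I. inner (F y) (x i - y))"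
      using n_pos by (simp add: inner_diff_right inner_sum_right sum_subtractf algebra_simps)
    also have "\<dots> \<le> (\<Sum>i\<in>I. inner (F (x i)) (x i - y))"
      using assms(4,7) \<open>y \<in> X\<close> by (rule sum_gap_le_sum_monotone_gap)
    also have "\<dots> = (\<Sum>i\<in>I. inner (Fh i) (x i - y)) + ?correlated_noise
        + inner (\<Sum>i\<in>I. F (x i) - Fh i) (anchor - y)"
      by (rule sum_inner_noise_split)
    also have "inner (\<Sum>i\<in>I. F (x i) - Fh i) (anchor - y) \<le> ?total_noise"
      using assms(3,8) \<open>y \<in> X\<close> by (intro inner_le_diameter) blast
    also have "(\<Sum>i\<in>I. inner (Fh i) (x i - y)) \<le> ?regret"
    proof (rule cSUP_upper2)
      have "(\<lambda>y. \<Sum>i\<in>I. inner (Fh i) (x i - y))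
          = (\<lambda>y. (\<Sum>i\<in>I. inner (Fh i) (x i)) - inner (\<Sum>i\<in>I. Fh i) y)"
        by (simp add: inner_diff_right sum_subtractf inner_sum_left)
      then show "bdd_above ((\<lambda>y. \<Sum>i\<in>I. inner (Fh i) (x i - y)) ` X)"
        using bdd_above_const_minus_inner[OF assms(2)] by metis
    qed (use \<open>y \<in> X\<close> in auto)
    finally show ?thesis by linarith
  qed
  then have "Err X F ?avg \<le> (?regret + ?total_noise + ?correlated_noise) / ?n"
    using assms(1) n_pos by (intro Err_le) (simp_all add: field_simps)
  then show ?thesis
    using n_pos by (simp add: field_simps)
qed

theorem lemmaB1:
  fixes X :: "'a::euclidean_space set" and F :: "'a \<Rightarrow> 'a" and Fh x z :: "nat \<Rightarrow> 'a"
    and gamma :: "nat \<Rightarrow> real" and R eta :: real and T :: nat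
  assumes "X \<noteq> {}" and "closed X" and "convex X" and "bounded X"
    and "\<forall>u\<in>X. \<forall>v\<in>X. norm (u - v) \<le> R"
    and "monotone_op X F"
    and "T \<ge> 1"
    and "AdaPEG X eta T Fh x z gamma"
  shows "real T * Err X F ((1 / real T) *\<^sub>R (\<Sum>t=1..T. x t))
    \<le> (SUP y\<in>X. (\<Sum>t=1..T. inner (Fh t) (x t - y)))
       + R * norm (\<Sum>t=1..T. F (x t) - Fh t)
       + (\<Sum>t=1..T. inner (F (x t) - Fh t) (x t - x 0))"
proof -
  have "x t \<in> X" if "t \<in> {1..T}" for t
    using assms(8) that by (intro AdaPEG_iterate_mem) auto
  moreover have "x 0 \<in> X"
    using assms(8) by (rule AdaPEG_iterate_mem) simp
  ultimately show ?thesis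
    using card_times_Err_average_le[OF assms(1,4,5,6), where I = "{1..T}" and anchor = "x 0"] assms(7)
    by simp
qed

end
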